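(* Let $i\geq1$ and let $\varphi_i\colon(A/\!/E(i))_*\to(A/\!/E(i-1))_*$ be the algebra map determined by $\zeta_k\mapsto\zeta_{k-1}$ for all $k\ge1$ (with $\zeta_0=1$) and $\overline{\tau}_j\mapsto\overline{\tau}_{j-1}$ for all $j\geq i+1$. Then $\varphi_i$ is a map of ungraded $E(i)_*$-comodules, where $(A/\!/E(i-1))_*$ is regarded as an $E(i)_*$-comodule.
   Context: Let $p$ be an odd prime. In the mod $p$ dual Steenrod algebra $A_*$ let $\zeta_n,\overline{\tau}_n$ be the conjugates of Milnor's generators $\xi_n,\tau_n$. For $n\ge0$, $(A/\!/E(n))_*=\mathbb{F}_p[\zeta_1,\zeta_2,\ldots]\otimes E(\overline{\tau}_{n+1},\overline{\tau}_{n+2},\ldots)\subseteq A_*$ is an $A_*$-comodule algebra via the coproduct $\psi(\zeta_n)=\sum_{a+b=n}\zeta_b\otimes\zeta_a^{p^b}$, $\psi(\overline{\tau}_n)=1\otimes\overline{\tau}_n+\sum_{a+b=n}\overline{\tau}_b\otimes\zeta_a^{p^b}$, and hence a comodule over the quotient Hopf algebra $E(i)_*=E(\overline{\tau}_0,\ldots,\overline{\tau}_i)$ (primitive generators) for any $i$, via the projection $A_*\to E(i)_*$ killing $\zeta_k$ ($k\ge1$) and $\overline{\tau}_k$ ($k>i$). *)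

theory Defs
  imports Main "HOL-Computational_Algebra.Primes" "HOL-Library.Poly_Mapping" "HOL-Library.Product_Lexorder"
begin

text \<open>A monomial is a pair (e, T): e gives the exponents of the even (polynomial)
generators, T is the set of odd (exterior) generators present, written in
increasing order.\<close>

type_synonym ('e,'o) mono = "('e \<Rightarrow>\<^sub>0 nat) \<times> 'o set"
type_synonym ('e,'o,'k) sp = "('e,'o) mono \<Rightarrow>\<^sub>0 'k"

definition inv_count :: "'o::linorder set \<Rightarrow> 'o set \<Rightarrow> nat" where
  "inv_count T1 T2 = card {(a,b). a \<in> T1 \<and> b \<in> T2 \<and> b < a}"

text \<open>c times the product of two monomials (Koszul sign for reordering odd generators).\<close>
definition mono_term :: "'k::comm_ring_1 \<Rightarrow> ('e,'o::linorder) mono \<Rightarrow> ('e,'o) mono \<Rightarrow> ('e,'o,'k) sp" where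
  "mono_term c m n =
     (if snd m \<inter> snd n = {}
      then Poly_Mapping.single (fst m + fst n, snd m \<union> snd n) (c * (-1) ^ inv_count (snd m) (snd n))
      else 0)"

definition sp_mult :: "('e,'o::linorder,'k::comm_ring_1) sp \<Rightarrow> ('e,'o,'k) sp \<Rightarrow> ('e,'o,'k) sp" where
  "sp_mult f g = (\<Sum>m\<in>Poly_Mapping.keys f. \<Sum>n\<in>Poly_Mapping.keys g. mono_term (Poly_Mapping.lookup f m * Poly_Mapping.lookup g n) m n)"

definition sp_const :: "'k::comm_ring_1 \<Rightarrow> ('e,'o,'k) sp" where
  "sp_const c = Poly_Mapping.single (0, {}) c"

abbreviation sp_one :: "('e,'o,'k::comm_ring_1) sp" where
  "sp_one \<equiv> sp_const 1"

definition sp_smult :: "'k::comm_ring_1 \<Rightarrow> ('e,'o::linorder,'k) sp \<Rightarrow> ('e,'o,'k) sp" where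
  "sp_smult c x = sp_mult (sp_const c) x"

definition sp_pow :: "('e,'o::linorder,'k::comm_ring_1) sp \<Rightarrow> nat \<Rightarrow> ('e,'o,'k) sp" where
  "sp_pow x n = ((sp_mult x) ^^ n) sp_one"

definition sp_even :: "'e \<Rightarrow> ('e,'o,'k::comm_ring_1) sp" where
  "sp_even k = Poly_Mapping.single (Poly_Mapping.single k 1, {}) 1"

definition sp_odd :: "'o \<Rightarrow> ('e,'o,'k::comm_ring_1) sp" where
  "sp_odd j = Poly_Mapping.single (0, {j}) 1"

definition mono_image ::
  "('e::linorder \<Rightarrow> ('e2,'o2::linorder,'k::comm_ring_1) sp) \<Rightarrow> ('o::linorder \<Rightarrow> ('e2,'o2,'k) sp)
   \<Rightarrow> ('e,'o) mono \<Rightarrow> ('e2,'o2,'k) sp" where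
  "mono_image ge go m =
     sp_mult
       (foldr (\<lambda>k acc. sp_mult (sp_pow (ge k) (Poly_Mapping.lookup (fst m) k)) acc)
              (sorted_list_of_set (Poly_Mapping.keys (fst m))) sp_one)
       (foldr (\<lambda>j acc. sp_mult (go j) acc) (sorted_list_of_set (snd m)) sp_one)"

definition hom_ext ::
  "('e::linorder \<Rightarrow> ('e2,'o2::linorder,'k::comm_ring_1) sp) \<Rightarrow> ('o::linorder \<Rightarrow> ('e2,'o2,'k) sp)
   \<Rightarrow> ('e,'o,'k) sp \<Rightarrow> ('e2,'o2,'k) sp" where
  "hom_ext ge go f = (\<Sum>m\<in>Poly_Mapping.keys f. sp_smult (Poly_Mapping.lookup f m) (mono_image ge go m))"

text \<open>A_* (as an algebra): even generators zeta_k (k \<ge> 1), odd generators taubar_j (j \<ge> 0).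
Type: even and odd generators indexed by nat.\<close>
type_synonym 'k Astar = "(nat, nat, 'k) sp"

text \<open>A_* \<otimes> A_*: the graded tensor product of free graded-commutative algebras is the
free graded-commutative algebra on the disjoint union of generators; index (False,k)
is the generator in the left factor, (True,k) in the right factor. Since
(False,_) < (True,_), a basis monomial x \<otimes> y is encoded as the product x\<cdot>y, which
gives the Koszul sign convention (x\<otimes>y)(x'\<otimes>y') = (-1)^{|y||x'|} xx'\<otimes>yy'.\<close>
type_synonym 'k Atens = "(bool \<times> nat, bool \<times> nat, 'k) sp"

definition zeta :: "nat \<Rightarrow> 'k::comm_ring_1 Astar" where
  "zeta k = (if k = 0 then sp_one else sp_even k)"

definition taubar :: "nat \<Rightarrow> 'k::comm_ring_1 Astar" where
  "taubar j = sp_odd j"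

definition zetaL :: "nat \<Rightarrow> 'k::comm_ring_1 Atens" where
  "zetaL k = (if k = 0 then sp_one else sp_even (False, k))"
definition zetaR :: "nat \<Rightarrow> 'k::comm_ring_1 Atens" where
  "zetaR k = (if k = 0 then sp_one else sp_even (True, k))"
definition taubarL :: "nat \<Rightarrow> 'k::comm_ring_1 Atens" where
  "taubarL j = sp_odd (False, j)"
definition taubarR :: "nat \<Rightarrow> 'k::comm_ring_1 Atens" where
  "taubarR j = sp_odd (True, j)"

text \<open>(A//E(n))_* = F_p[zeta_1,zeta_2,...] \<otimes> E(taubar_{n+1},...) as a subset of A_*.\<close>
definition AmodE :: "nat \<Rightarrow> 'k::comm_ring_1 Astar \<Rightarrow> bool" where
  "AmodE n f \<longleftrightarrow> (\<forall>m\<in>Poly_Mapping.keys f. 0 \<notin> Poly_Mapping.keys (fst m) \<and> finite (snd m) \<and> snd m \<subseteq> {n+1..})"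

definition psi :: "nat \<Rightarrow> 'k::comm_ring_1 Astar \<Rightarrow> 'k Atens" where
  "psi p = hom_ext
     (\<lambda>n. \<Sum>b\<le>n. sp_mult (zetaL b) (sp_pow (zetaR (n - b)) (p ^ b)))
     (\<lambda>n. taubarR n + (\<Sum>b\<le>n. sp_mult (taubarL b) (sp_pow (zetaR (n - b)) (p ^ b))))"

text \<open>Projection A_* \<otimes> A_* \<rightarrow> E(i)_* \<otimes> A_* (on the left factor, kill zeta_k, k \<ge> 1,
and taubar_k, k > i); the image is the subalgebra E(i)_* \<otimes> A_*.\<close>
definition projE :: "nat \<Rightarrow> 'k::comm_ring_1 Atens \<Rightarrow> 'k Atens" where
  "projE i = hom_ext
     (\<lambda>(s,k). if s then zetaR k else (if k = 0 then sp_one else 0))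
     (\<lambda>(s,j). if s then taubarR j else (if j \<le> i then taubarL j else 0))"

definition coact :: "nat \<Rightarrow> nat \<Rightarrow> 'k::comm_ring_1 Astar \<Rightarrow> 'k Atens" where
  "coact p i f = projE i (psi p f)"

definition embR :: "'k::comm_ring_1 Astar \<Rightarrow> 'k Atens" where
  "embR = hom_ext zetaR taubarR"

definition id_tensor :: "('k::comm_ring_1 Astar \<Rightarrow> 'k Astar) \<Rightarrow> 'k Atens \<Rightarrow> 'k Atens" where
  "id_tensor F = hom_ext
     (\<lambda>(s,k). if s then embR (F (zeta k)) else zetaL k)
     (\<lambda>(s,j). if s then embR (F (taubar j)) else taubarL j)"

definition phi :: "nat \<Rightarrow> 'k::comm_ring_1 Astar \<Rightarrow> 'k Astar" where
  "phi i = hom_ext (\<lambda>k. zeta (k - 1)) (\<lambda>j. taubar (j - 1))"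

end

(*
  All maps involved -- the coproduct psi, the projection onto E(i)_* (x) A_*, phi_i and
  id (x) phi_i -- are algebra maps out of free graded-commutative algebras, given by images of
  the generators of the right parity. Such maps are closed under composition, so both sides of
  the identity are algebra maps out of (A//E(i))_* and it suffices to compare them on the
  generators zeta_k (k >= 1) and taubar_j (j > i). On zeta_k both sides give 1 (x) zeta_(k-1).
  The coaction of taubar_j is 1 (x) taubar_j + sum_(b <= min i j) taubar_b (x) zeta_(j-b)^(p^b);
  since j > i, applying id (x) phi_i to it gives exactly the coaction of taubar_(j-1).
*)

theory Submission
  imports Defs
begin

abbreviation "lookup \<equiv> Poly_Mapping.lookup"
abbreviation "keys \<equiv> Poly_Mapping.keys"
abbreviation "single \<equiv> Poly_Mapping.single"

section \<open>Bilinearity and unit of the product\<close>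

lemma poly_mapping_eq_sum_single:
  "(x :: 'a \<Rightarrow>\<^sub>0 'b::comm_monoid_add) = (\<Sum>m\<in>keys x. single m (lookup x m))"
  by (rule poly_mapping_eqI) (simp add: lookup_sum lookup_single when_def in_keys_iff)

lemma lookup_mono_term: "lookup (mono_term a m n) q = a * lookup (mono_term 1 m n) q"
  by (simp add: mono_term_def lookup_single when_def)

lemma mono_term_zero [simp]: "mono_term 0 m n = 0"
  by (simp add: mono_term_def)

lemma mono_term_uminus: "mono_term (- a) m n = - mono_term a m n"
  by (simp add: mono_term_def single_uminus)

lemma keys_mono_term:
  "keys (mono_term a m n) \<subseteq> {(fst m + fst n, snd m \<union> snd n)}"
  "q \<in> keys (mono_term a m n) \<Longrightarrow> snd m \<inter> snd n = {}"
  by (auto simp: mono_term_def split: if_splits)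

lemma mono_term_unit_left: "mono_term a (0, {}) n = single n a"
  by (cases n) (simp add: mono_term_def inv_count_def)

lemma mono_term_unit_right: "mono_term a n (0, {}) = single n a"
  by (cases n) (simp add: mono_term_def inv_count_def)

lemma sp_mult_eq_sum_over:
  assumes "finite A" "finite B" "keys x \<subseteq> A" "keys y \<subseteq> B"
  shows "sp_mult x y = (\<Sum>m\<in>A. \<Sum>n\<in>B. mono_term (lookup x m * lookup y n) m n)"
proof -
  have "(\<Sum>n\<in>keys y. mono_term (lookup x m * lookup y n) m n)
      = (\<Sum>n\<in>B. mono_term (lookup x m * lookup y n) m n)" for m
    by (rule sum.mono_neutral_left) (use assms in \<open>auto simp: in_keys_iff\<close>)
  moreover have "(\<Sum>m\<in>keys x. \<Sum>n\<in>B. mono_term (lookup x m * lookup y n) m n)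
      = (\<Sum>m\<in>A. \<Sum>n\<in>B. mono_term (lookup x m * lookup y n) m n)"
    by (rule sum.mono_neutral_left) (use assms in \<open>auto simp: in_keys_iff\<close>)
  ultimately show ?thesis
    unfolding sp_mult_def by simp
qed

lemma lookup_sp_mult:
  assumes "finite A" "finite B" "keys x \<subseteq> A" "keys y \<subseteq> B"
  shows "lookup (sp_mult x y) q
    = (\<Sum>m\<in>A. \<Sum>n\<in>B. lookup x m * lookup y n * lookup (mono_term 1 m n) q)"
  by (simp add: sp_mult_eq_sum_over[OF assms] lookup_sum lookup_mono_term[of "_ * _"])

lemma sp_mult_add_left: "sp_mult (x + x') y = sp_mult x y + sp_mult x' y"
proof (rule poly_mapping_eqI)
  fix q
  let ?A = "keys x \<union> keys x'"
  show "lookup (sp_mult (x + x') y) q = lookup (sp_mult x y + sp_mult x' y) q"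
    by (simp add: lookup_add lookup_sp_mult[OF _ _ keys_add order_refl]
        lookup_sp_mult[of ?A "keys y" x y] lookup_sp_mult[of ?A "keys y" x' y]
        distrib_right sum.distrib)
qed

lemma sp_mult_add_right: "sp_mult y (x + x') = sp_mult y x + sp_mult y x'"
proof (rule poly_mapping_eqI)
  fix q
  let ?A = "keys x \<union> keys x'"
  show "lookup (sp_mult y (x + x')) q = lookup (sp_mult y x + sp_mult y x') q"
    by (simp add: lookup_add lookup_sp_mult[OF _ _ order_refl keys_add]
        lookup_sp_mult[of "keys y" ?A y x] lookup_sp_mult[of "keys y" ?A y x']
        distrib_left distrib_right sum.distrib)
qed

lemma sp_mult_zero [simp]: "sp_mult 0 y = 0" "sp_mult y 0 = 0"
  by (simp_all add: sp_mult_def)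

lemma sp_mult_sum_left: "sp_mult (\<Sum>i\<in>I. f i) y = (\<Sum>i\<in>I. sp_mult (f i) y)"
  by (induction I rule: infinite_finite_induct) (simp_all add: sp_mult_add_left)

lemma sp_mult_sum_right: "sp_mult y (\<Sum>i\<in>I. f i) = (\<Sum>i\<in>I. sp_mult y (f i))"
  by (induction I rule: infinite_finite_induct) (simp_all add: sp_mult_add_right)

lemma sp_mult_sum_sum:
  "sp_mult (\<Sum>i\<in>I. f i) (\<Sum>j\<in>J. g j) = (\<Sum>i\<in>I. \<Sum>j\<in>J. sp_mult (f i) (g j))"
  by (subst sp_mult_sum_left) (simp only: sp_mult_sum_right)

lemma sp_mult_single: "sp_mult (single m a) (single n b) = mono_term (a * b) m n"
  by (subst sp_mult_eq_sum_over[of "{m}" "{n}"]) auto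

lemma sum_mult_indicator_eq:
  "finite K \<Longrightarrow> (\<Sum>m\<in>K. f m * (if m = q then 1 else 0)) = (if q \<in> K then f q else (0::'b::semiring_1))"
proof -
  have "f m * (if m = q then 1 else 0) = (if m = q then f m else 0)" for m
    by simp
  then show "finite K \<Longrightarrow> ?thesis"
    by (simp only: sum.delta)
qed

lemma lookup_sp_smult [simp]: "lookup (sp_smult c x) q = c * lookup x q"
proof -
  have "lookup (sp_smult c x) q
      = (\<Sum>m\<in>{(0, {})}. \<Sum>n\<in>keys x. lookup (single (0, {}) c) m * lookup x n * lookup (mono_term 1 m n) q)"
    unfolding sp_smult_def sp_const_def by (rule lookup_sp_mult) auto
  also have "\<dots> = (\<Sum>n\<in>keys x. c * lookup x n * (if n = q then 1 else 0))"
    by (simp add: mono_term_unit_left lookup_single when_def)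
  also have "\<dots> = c * lookup x q"
    by (simp add: sum_mult_indicator_eq in_keys_iff)
  finally show ?thesis .
qed

lemma sp_one_mult [simp]: "sp_mult sp_one x = x"
  by (rule poly_mapping_eqI) (simp flip: sp_smult_def)

lemma sp_mult_one [simp]: "sp_mult x sp_one = x"
proof (rule poly_mapping_eqI)
  fix q
  have "lookup (sp_mult x sp_one) q
      = (\<Sum>m\<in>keys x. \<Sum>n\<in>{(0, {})}. lookup x m * lookup (single (0, {}) 1) n * lookup (mono_term 1 m n) q)"
    unfolding sp_const_def by (rule lookup_sp_mult) auto
  also have "\<dots> = (\<Sum>m\<in>keys x. lookup x m * (if m = q then 1 else 0))"
    by (simp add: mono_term_unit_right lookup_single when_def)
  also have "\<dots> = lookup x q"
    by (simp add: sum_mult_indicator_eq in_keys_iff)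
  finally show "lookup (sp_mult x sp_one) q = lookup x q" .
qed

lemma keys_sp_smult: "keys (sp_smult c x) \<subseteq> keys x"
  by (auto simp: in_keys_iff)

lemma sp_smult_mult_left: "sp_mult (sp_smult c x) y = sp_smult c (sp_mult x y)"
  by (rule poly_mapping_eqI)
    (simp add: lookup_sp_mult[OF _ _ keys_sp_smult order_refl]
      lookup_sp_mult[of "keys x" "keys y" x y] sum_distrib_left mult.assoc)

lemma sp_smult_mult_right: "sp_mult y (sp_smult c x) = sp_smult c (sp_mult y x)"
  by (rule poly_mapping_eqI)
    (simp add: lookup_sp_mult[OF _ _ order_refl keys_sp_smult]
      lookup_sp_mult[of "keys y" "keys x" y x] sum_distrib_left mult.assoc mult.left_commute)

lemma sp_smult_zero [simp]: "sp_smult c 0 = 0" "sp_smult 0 x = 0"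
  by (rule poly_mapping_eqI, simp)+

lemma sp_smult_smult [simp]: "sp_smult c (sp_smult d x) = sp_smult (c * d) x"
  by (rule poly_mapping_eqI) (simp add: mult.assoc)

lemma sp_smult_one [simp]: "sp_smult 1 x = x"
  by (rule poly_mapping_eqI) simp

lemma sp_smult_minus_one: "sp_smult (-1) x = - x"
  by (rule poly_mapping_eqI) simp

lemma sp_mult_uminus_left: "sp_mult (- x) y = - sp_mult x y"
  by (metis sp_smult_minus_one sp_smult_mult_left)

lemma sp_smult_sum: "sp_smult c (\<Sum>i\<in>I. f i) = (\<Sum>i\<in>I. sp_smult c (f i))"
  by (rule poly_mapping_eqI) (simp add: lookup_sum sum_distrib_left)

lemma sp_smult_add_left: "sp_smult (a + b) x = sp_smult a x + sp_smult b x"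
  by (rule poly_mapping_eqI) (simp add: lookup_add distrib_right)

section \<open>Koszul signs\<close>

lemma finite_inv_pairs:
  "finite A \<Longrightarrow> finite B \<Longrightarrow> finite {(a, b). a \<in> A \<and> b \<in> B \<and> P a b}"
  by (rule finite_subset[of _ "A \<times> B"]) auto

lemma inv_count_Un_left:
  fixes A B C :: "'o::linorder set"
  assumes "finite A" "finite B" "finite C" "A \<inter> B = {}"
  shows "inv_count (A \<union> B) C = inv_count A C + inv_count B C"
proof -
  have "{(a, b). a \<in> A \<union> B \<and> b \<in> C \<and> b < a}
      = {(a, b). a \<in> A \<and> b \<in> C \<and> b < a} \<union> {(a, b). a \<in> B \<and> b \<in> C \<and> b < a}"
    by auto
  then show ?thesis
    unfolding inv_count_def using assms
    by (simp add: card_Un_disjoint finite_inv_pairs disjoint_iff)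
qed

lemma inv_count_Un_right:
  fixes A B C :: "'o::linorder set"
  assumes "finite A" "finite B" "finite C" "B \<inter> C = {}"
  shows "inv_count A (B \<union> C) = inv_count A B + inv_count A C"
proof -
  have "{(a, b). a \<in> A \<and> b \<in> B \<union> C \<and> b < a}
      = {(a, b). a \<in> A \<and> b \<in> B \<and> b < a} \<union> {(a, b). a \<in> A \<and> b \<in> C \<and> b < a}"
    by auto
  then show ?thesis
    unfolding inv_count_def using assms
    by (simp add: card_Un_disjoint finite_inv_pairs disjoint_iff)
qed

lemma inv_count_commute:
  fixes A B :: "'o::linorder set"
  assumes "finite A" "finite B" "A \<inter> B = {}"
  shows "inv_count A B + inv_count B A = card A * card B"
proof -
  have "{(a, b). a \<in> B \<and> b \<in> A \<and> b < a} = prod.swap ` {(a, b). a \<in> A \<and> b \<in> B \<and> a < b}"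
    by auto
  then have swap: "inv_count B A = card {(a, b). a \<in> A \<and> b \<in> B \<and> a < b}"
    unfolding inv_count_def by (simp add: card_image)
  have "A \<times> B = {(a, b). a \<in> A \<and> b \<in> B \<and> b < a} \<union> {(a, b). a \<in> A \<and> b \<in> B \<and> a < b}"
    using assms(3) by (auto simp: neq_iff)
  also have "card \<dots> = inv_count A B + inv_count B A"
    unfolding swap unfolding inv_count_def using assms(1,2)
    by (intro card_Un_disjoint finite_inv_pairs) auto
  finally have "card (A \<times> B) = inv_count A B + inv_count B A" .
  then show ?thesis
    by (simp add: card_cartesian_product)
qed

lemma inv_count_empty [simp]: "inv_count {} B = 0" "inv_count A {} = 0"
  by (simp_all add: inv_count_def)

lemma inv_count_singleton: "inv_count {a} B = card {b\<in>B. b < a}"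
proof -
  have "{(x, b). x \<in> {a} \<and> b \<in> B \<and> b < x} = Pair a ` {b\<in>B. b < a}"
    by auto
  then show ?thesis
    unfolding inv_count_def by (simp add: card_image inj_on_def)
qed

lemma mono_term_mult_single:
  assumes "finite (snd m)" "finite (snd n)" "finite (snd l)"
  shows "sp_mult (mono_term a m n) (single l c) =
    (if snd m \<inter> snd n = {} \<and> snd m \<inter> snd l = {} \<and> snd n \<inter> snd l = {}
     then single (fst m + fst n + fst l, snd m \<union> snd n \<union> snd l)
       (a * c * (-1) ^ (inv_count (snd m) (snd n) + inv_count (snd m) (snd l) + inv_count (snd n) (snd l)))
     else 0)"
  using assms
  by (auto simp: mono_term_def sp_mult_single inv_count_Un_left power_add mult_ac)

lemma single_mult_mono_term:
  assumes "finite (snd m)" "finite (snd n)" "finite (snd l)"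
  shows "sp_mult (single m a) (mono_term c n l) =
    (if snd m \<inter> snd n = {} \<and> snd m \<inter> snd l = {} \<and> snd n \<inter> snd l = {}
     then single (fst m + fst n + fst l, snd m \<union> snd n \<union> snd l)
       (a * c * (-1) ^ (inv_count (snd m) (snd n) + inv_count (snd m) (snd l) + inv_count (snd n) (snd l)))
     else 0)"
  using assms
  by (auto simp: mono_term_def sp_mult_single inv_count_Un_right power_add mult_ac add.assoc Un_assoc)

lemma sp_mult_single_assoc:
  assumes "finite (snd m)" "finite (snd n)" "finite (snd l)"
  shows "sp_mult (sp_mult (single m a) (single n b)) (single l c)
       = sp_mult (single m a) (sp_mult (single n b) (single l c))"
  by (simp add: sp_mult_single mono_term_mult_single single_mult_mono_term assms mult_ac)

lemma mono_term_commute: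
  assumes "finite (snd m)" "finite (snd n)"
  shows "mono_term (a::'k::comm_ring_1) n m = mono_term (a * (-1) ^ (card (snd m) * card (snd n))) m n"
proof (cases "snd m \<inter> snd n = {}")
  case True
  have "(-1::'k) ^ (card (snd m) * card (snd n)) * (-1) ^ inv_count (snd m) (snd n)
      = (-1) ^ (inv_count (snd m) (snd n) + inv_count (snd n) (snd m)) * (-1) ^ inv_count (snd m) (snd n)"
    by (simp only: inv_count_commute[OF assms True])
  also have "\<dots> = (-1) ^ (2 * inv_count (snd m) (snd n)) * (-1) ^ inv_count (snd n) (snd m)"
    by (simp add: power_add mult_ac)
  also have "\<dots> = (-1) ^ inv_count (snd n) (snd m)"
    by (simp add: power_add power_mult)
  finally show ?thesis
    using True by (simp add: mono_term_def Int_commute Un_commute add.commute mult.assoc)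
next
  case False
  then show ?thesis
    by (auto simp: mono_term_def Int_commute)
qed

section \<open>Homogeneous elements\<close>

definition sp_keys_all :: "(('e, 'o) mono \<Rightarrow> bool) \<Rightarrow> ('e, 'o, 'k::zero) sp \<Rightarrow> bool" where
  "sp_keys_all R x \<longleftrightarrow> (\<forall>m\<in>keys x. R m)"

definition sp_finite :: "('e, 'o, 'k::zero) sp \<Rightarrow> bool" where
  "sp_finite x \<longleftrightarrow> sp_keys_all (\<lambda>m. finite (snd m)) x"

definition sp_homog :: "bool \<Rightarrow> ('e, 'o, 'k::zero) sp \<Rightarrow> bool" where
  "sp_homog b x \<longleftrightarrow> sp_keys_all (\<lambda>m. finite (snd m) \<and> odd (card (snd m)) = b) x"

lemma sp_keys_all_zero [simp]: "sp_keys_all R 0"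
  by (simp add: sp_keys_all_def)

lemma sp_keys_all_add: "sp_keys_all R x \<Longrightarrow> sp_keys_all R y \<Longrightarrow> sp_keys_all R (x + y)"
  using keys_add[of x y] by (auto simp: sp_keys_all_def)

lemma sp_keys_all_sum: "(\<And>i. i \<in> I \<Longrightarrow> sp_keys_all R (f i)) \<Longrightarrow> sp_keys_all R (\<Sum>i\<in>I. f i)"
  by (induction I rule: infinite_finite_induct) (auto intro: sp_keys_all_add)

lemma sp_keys_all_smult: "sp_keys_all R x \<Longrightarrow> sp_keys_all R (sp_smult c x)"
  using keys_sp_smult by (auto simp: sp_keys_all_def)

lemma sp_keys_all_one: "R (0, {}) \<Longrightarrow> sp_keys_all R sp_one"
  by (simp add: sp_keys_all_def sp_const_def)

lemma keys_sp_mult: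
  assumes "q \<in> keys (sp_mult x y)"
  obtains m n where "m \<in> keys x" "n \<in> keys y" "snd m \<inter> snd n = {}"
    "q = (fst m + fst n, snd m \<union> snd n)"
proof -
  have "q \<in> (\<Union>m\<in>keys x. keys (\<Sum>n\<in>keys y. mono_term (lookup x m * lookup y n) m n))"
    using assms unfolding sp_mult_def by (rule subsetD[OF keys_sum])
  then obtain m where m: "m \<in> keys x" "q \<in> keys (\<Sum>n\<in>keys y. mono_term (lookup x m * lookup y n) m n)"
    by blast
  have "q \<in> (\<Union>n\<in>keys y. keys (mono_term (lookup x m * lookup y n) m n))"
    using m(2) by (rule subsetD[OF keys_sum])
  then obtain n where n: "n \<in> keys y" "q \<in> keys (mono_term (lookup x m * lookup y n) m n)"
    by blast
  show ?thesis
    using that[OF m(1) n(1) keys_mono_term(2)[OF n(2)]] keys_mono_term(1)[of _ m n] n(2) by blast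
qed

lemma sp_keys_all_mult:
  assumes "sp_keys_all P x" "sp_keys_all Q y"
    and "\<And>m n. P m \<Longrightarrow> Q n \<Longrightarrow> snd m \<inter> snd n = {} \<Longrightarrow> R (fst m + fst n, snd m \<union> snd n)"
  shows "sp_keys_all R (sp_mult x y)"
  unfolding sp_keys_all_def
proof
  fix q
  assume "q \<in> keys (sp_mult x y)"
  then obtain m n where "m \<in> keys x" "n \<in> keys y" "snd m \<inter> snd n = {}"
    and "q = (fst m + fst n, snd m \<union> snd n)"
    by (rule keys_sp_mult)
  with assms show "R q"
    unfolding sp_keys_all_def by blast
qed

lemma sp_pow_0 [simp]: "sp_pow x 0 = sp_one"
  by (simp add: sp_pow_def)

lemma sp_pow_Suc: "sp_pow x (Suc n) = sp_mult x (sp_pow x n)"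
  by (simp add: sp_pow_def)

lemma sp_pow_one [simp]: "sp_pow x (Suc 0) = x"
  by (simp add: sp_pow_def)

lemma sp_keys_all_pow:
  assumes "sp_keys_all R x" "R (0, {})"
    and "\<And>m n. R m \<Longrightarrow> R n \<Longrightarrow> snd m \<inter> snd n = {} \<Longrightarrow> R (fst m + fst n, snd m \<union> snd n)"
  shows "sp_keys_all R (sp_pow x n)"
proof (induction n)
  case 0
  show ?case
    by (simp add: sp_keys_all_one assms(2))
next
  case (Suc n)
  show ?case
    unfolding sp_pow_Suc by (rule sp_keys_all_mult[where R = R, OF assms(1) Suc.IH assms(3)])
qed

lemma sp_homog_imp_finite: "sp_homog b x \<Longrightarrow> sp_finite x"
  by (auto simp: sp_keys_all_def sp_homog_def sp_finite_def)

lemma sp_homog_mult: "sp_homog a x \<Longrightarrow> sp_homog b y \<Longrightarrow> sp_homog (a \<noteq> b) (sp_mult x y)"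
  unfolding sp_homog_def by (erule sp_keys_all_mult, assumption) (auto simp: card_Un_disjoint)

lemma sp_homog_mult_even: "sp_homog False x \<Longrightarrow> sp_homog False y \<Longrightarrow> sp_homog False (sp_mult x y)"
  using sp_homog_mult[of False x False y] by simp

lemma sp_homog_zero [simp]: "sp_homog b 0"
  by (simp add: sp_homog_def)

lemma sp_homog_add: "sp_homog b x \<Longrightarrow> sp_homog b y \<Longrightarrow> sp_homog b (x + y)"
  unfolding sp_homog_def by (rule sp_keys_all_add)

lemma sp_homog_sum: "(\<And>i. i \<in> I \<Longrightarrow> sp_homog b (f i)) \<Longrightarrow> sp_homog b (\<Sum>i\<in>I. f i)"
  unfolding sp_homog_def by (rule sp_keys_all_sum)

lemma sp_homog_smult: "sp_homog b x \<Longrightarrow> sp_homog b (sp_smult c x)"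
  unfolding sp_homog_def by (rule sp_keys_all_smult)

lemma sp_homog_one: "sp_homog False sp_one"
  unfolding sp_homog_def by (rule sp_keys_all_one) simp

lemma sp_homog_pow: "sp_homog False x \<Longrightarrow> sp_homog False (sp_pow x n)"
  unfolding sp_homog_def by (erule sp_keys_all_pow) (auto simp: card_Un_disjoint)

lemma sp_finite_mult: "sp_finite x \<Longrightarrow> sp_finite y \<Longrightarrow> sp_finite (sp_mult x y)"
  unfolding sp_finite_def by (erule sp_keys_all_mult, assumption) auto

lemma sp_finite_one: "sp_finite sp_one"
  unfolding sp_finite_def by (rule sp_keys_all_one) simp

lemma sp_finite_pow: "sp_finite x \<Longrightarrow> sp_finite (sp_pow x n)"
  unfolding sp_finite_def by (erule sp_keys_all_pow) auto

section \<open>Associativity and graded commutativity\<close>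

lemma sp_mult_sum_sum_left:
  "sp_mult (sp_mult (\<Sum>m\<in>A. X m) (\<Sum>n\<in>B. Y n)) (\<Sum>l\<in>C. Z l)
   = (\<Sum>m\<in>A. \<Sum>n\<in>B. \<Sum>l\<in>C. sp_mult (sp_mult (X m) (Y n)) (Z l))"
proof -
  have "sp_mult (sp_mult (\<Sum>m\<in>A. X m) (\<Sum>n\<in>B. Y n)) (\<Sum>l\<in>C. Z l)
      = sp_mult (\<Sum>m\<in>A. \<Sum>n\<in>B. sp_mult (X m) (Y n)) (\<Sum>l\<in>C. Z l)"
    by (simp only: sp_mult_sum_sum)
  also have "\<dots> = (\<Sum>m\<in>A. \<Sum>n\<in>B. sp_mult (sp_mult (X m) (Y n)) (\<Sum>l\<in>C. Z l))"
    by (simp only: sp_mult_sum_left)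
  finally show ?thesis
    by (simp only: sp_mult_sum_right)
qed

lemma sp_mult_sum_sum_right:
  "sp_mult (\<Sum>m\<in>A. X m) (sp_mult (\<Sum>n\<in>B. Y n) (\<Sum>l\<in>C. Z l))
   = (\<Sum>m\<in>A. \<Sum>n\<in>B. \<Sum>l\<in>C. sp_mult (X m) (sp_mult (Y n) (Z l)))"
proof -
  have "sp_mult (\<Sum>m\<in>A. X m) (sp_mult (\<Sum>n\<in>B. Y n) (\<Sum>l\<in>C. Z l))
      = sp_mult (\<Sum>m\<in>A. X m) (\<Sum>n\<in>B. \<Sum>l\<in>C. sp_mult (Y n) (Z l))"
    by (simp only: sp_mult_sum_sum)
  also have "\<dots> = (\<Sum>m\<in>A. sp_mult (X m) (\<Sum>n\<in>B. \<Sum>l\<in>C. sp_mult (Y n) (Z l)))"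
    by (rule sp_mult_sum_left)
  finally show ?thesis
    by (simp only: sp_mult_sum_right)
qed

lemma sp_mult_assoc:
  assumes "sp_finite x" "sp_finite y" "sp_finite z"
  shows "sp_mult (sp_mult x y) z = sp_mult x (sp_mult y z)"
proof -
  let ?X = "\<lambda>m. single m (lookup x m)" and ?Y = "\<lambda>n. single n (lookup y n)"
    and ?Z = "\<lambda>l. single l (lookup z l)"
  have "sp_mult (sp_mult x y) z = sp_mult (sp_mult (sum ?X (keys x)) (sum ?Y (keys y))) (sum ?Z (keys z))"
    by (simp flip: poly_mapping_eq_sum_single)
  also have "\<dots> = (\<Sum>m\<in>keys x. \<Sum>n\<in>keys y. \<Sum>l\<in>keys z. sp_mult (sp_mult (?X m) (?Y n)) (?Z l))"
    by (rule sp_mult_sum_sum_left)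
  also have "\<dots> = (\<Sum>m\<in>keys x. \<Sum>n\<in>keys y. \<Sum>l\<in>keys z. sp_mult (?X m) (sp_mult (?Y n) (?Z l)))"
    using assms by (intro sum.cong refl sp_mult_single_assoc) (auto simp: sp_keys_all_def sp_finite_def)
  also have "\<dots> = sp_mult (sum ?X (keys x)) (sp_mult (sum ?Y (keys y)) (sum ?Z (keys z)))"
    by (rule sp_mult_sum_sum_right[symmetric])
  also have "\<dots> = sp_mult x (sp_mult y z)"
    by (simp flip: poly_mapping_eq_sum_single)
  finally show ?thesis .
qed

lemma sp_mult_commute_homog:
  fixes x y :: "('e, 'o::linorder, 'k::comm_ring_1) sp"
  assumes "sp_homog a x" "sp_homog b y"
  shows "sp_mult y x = sp_smult (if a \<and> b then -1 else 1) (sp_mult x y)"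
proof (rule poly_mapping_eqI)
  fix q
  let ?s = "if a \<and> b then -1 else 1 :: 'k"
  have swap: "lookup (mono_term (1::'k) n m) q = ?s * lookup (mono_term 1 m n) q"
    if "m \<in> keys x" "n \<in> keys y" for m n
  proof -
    have fin: "finite (snd m)" "finite (snd n)" and par: "odd (card (snd m)) = a" "odd (card (snd n)) = b"
      using assms that by (auto simp: sp_keys_all_def sp_homog_def)
    have "lookup (mono_term (1::'k) n m) q = (-1) ^ (card (snd m) * card (snd n)) * lookup (mono_term 1 m n) q"
      by (simp add: mono_term_commute[OF fin] lookup_mono_term[of "(-1) ^ _"])
    also have "(-1::'k) ^ (card (snd m) * card (snd n)) = ?s"
      using par by (auto simp: power_mult minus_one_power_iff)
    finally show ?thesis .
  qed
  have "lookup (sp_mult y x) q = (\<Sum>n\<in>keys y. \<Sum>m\<in>keys x. lookup y n * lookup x m * lookup (mono_term 1 n m) q)"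
    by (rule lookup_sp_mult) auto
  also have "\<dots> = (\<Sum>m\<in>keys x. \<Sum>n\<in>keys y. ?s * (lookup x m * lookup y n * lookup (mono_term 1 m n) q))"
    by (subst sum.swap) (intro sum.cong refl, simp add: swap mult_ac)
  also have "\<dots> = ?s * lookup (sp_mult x y) q"
    by (simp add: lookup_sp_mult[of "keys x" "keys y" x y] sum_distrib_left)
  finally show "lookup (sp_mult y x) q = lookup (sp_smult ?s (sp_mult x y)) q"
    by simp
qed

lemma sp_mult_commute_even:
  assumes "sp_homog False x" "sp_homog b y"
  shows "sp_mult y x = sp_mult x y"
  using sp_mult_commute_homog[OF assms] by simp

lemma sp_mult_anticommute:
  assumes "sp_homog True x" "sp_homog True y"
  shows "sp_mult y x = - sp_mult x y"
  using sp_mult_commute_homog[OF assms] by (simp add: sp_smult_minus_one)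

text \<open>Odd squares vanish in every characteristic, 2 included: the diagonal terms vanish by the
  exterior relations and the off-diagonal terms cancel in pairs.\<close>

lemma sum_sum_antisymmetric:
  fixes g :: "'a \<Rightarrow> 'a \<Rightarrow> 'b::ab_group_add"
  assumes "finite K"
    and "\<And>m n. m \<in> K \<Longrightarrow> n \<in> K \<Longrightarrow> g n m = - g m n" and "\<And>m. m \<in> K \<Longrightarrow> g m m = 0"
  shows "(\<Sum>m\<in>K. \<Sum>n\<in>K. g m n) = 0"
  using assms
proof (induction K rule: finite_induct)
  case (insert a K)
  have "(\<Sum>m\<in>K. g m a) = - (\<Sum>n\<in>K. g a n)"
    unfolding sum_negf[symmetric] by (intro sum.cong refl insert.prems(1)) auto
  moreover have "(\<Sum>m\<in>K. \<Sum>n\<in>K. g m n) = 0"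
    by (intro insert.IH insert.prems) auto
  ultimately show ?case
    using insert.hyps insert.prems(2) by (simp add: sum.distrib)
qed simp

lemma sp_mult_self_odd:
  fixes x :: "('e, 'o::linorder, 'k::comm_ring_1) sp"
  assumes "sp_homog True x"
  shows "sp_mult x x = 0"
proof -
  let ?g = "\<lambda>m n. mono_term (lookup x m * lookup x n) m n"
  have odd: "finite (snd m)" "odd (card (snd m))" if "m \<in> keys x" for m
    using assms that by (auto simp: sp_homog_def sp_keys_all_def)
  have anti: "?g n m = - ?g m n" if "m \<in> keys x" "n \<in> keys x" for m n
  proof -
    have "(-1::'k) ^ (card (snd m) * card (snd n)) = -1"
      using odd[OF that(1)] odd[OF that(2)] by (simp add: power_minus_odd)
    then have "?g n m = mono_term (- (lookup x n * lookup x m)) m n"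
      using mono_term_commute[OF odd(1)[OF that(1)] odd(1)[OF that(2)], of "lookup x n * lookup x m"]
      by simp
    then show ?thesis
      by (simp only: mono_term_uminus mult.commute)
  qed
  have diag: "?g m m = 0" if "m \<in> keys x" for m
  proof -
    have "snd m \<noteq> {}"
      using odd[OF that] by (intro notI) simp
    then show ?thesis
      by (simp add: mono_term_def)
  qed
  show ?thesis
    unfolding sp_mult_def by (rule sum_sum_antisymmetric[OF finite_keys anti diag])
qed

lemma sp_mult_left_anticommute:
  assumes "sp_homog True u" "sp_homog True v" "sp_finite w"
  shows "sp_mult u (sp_mult v w) = - sp_mult v (sp_mult u w)"
proof -
  have fin: "sp_finite u" "sp_finite v"
    using assms(1,2) by (auto intro: sp_homog_imp_finite)
  have "sp_mult u (sp_mult v w) = sp_mult (sp_mult u v) w"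
    using fin assms(3) by (rule sp_mult_assoc[symmetric])
  also have "sp_mult u v = - sp_mult v u"
    by (rule sp_mult_anticommute[OF assms(2,1)])
  also have "sp_mult (- sp_mult v u) w = - sp_mult v (sp_mult u w)"
    using fin assms(3) by (simp add: sp_mult_uminus_left sp_mult_assoc)
  finally show ?thesis .
qed

lemma sp_mult_odd_self_left:
  assumes "sp_homog True u" "sp_finite w"
  shows "sp_mult u (sp_mult u w) = 0"
  using assms sp_homog_imp_finite[OF assms(1)]
  by (simp add: sp_mult_assoc[symmetric] sp_mult_self_odd)

section \<open>Images of monomials\<close>

text \<open>The even elements form a commutative monoid. Evaluating the even part of a monomial
  image in it turns the exponent law \<open>even_image_add\<close> into \<open>prod.distrib\<close>.\<close>

typedef (overloaded) ('e, 'o, 'k) even_sp =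
    "{x :: ('e, 'o::linorder, 'k::comm_ring_1) sp. sp_homog False x}"
  morphisms Rep_even Abs_even
  by (rule exI[of _ 0]) (simp add: sp_homog_def)

lemma sp_homog_Rep_even: "sp_homog False (Rep_even a)"
  using Rep_even[of a] by simp

lemma Rep_even_Abs_even: "sp_homog False x \<Longrightarrow> Rep_even (Abs_even x) = x"
  by (rule Abs_even_inverse) simp

instantiation even_sp :: (type, linorder, comm_ring_1) comm_monoid_mult
begin

definition one_even_sp_def: "1 = Abs_even sp_one"

definition times_even_sp_def: "a * b = Abs_even (sp_mult (Rep_even a) (Rep_even b))"

lemma Rep_even_mult: "Rep_even (a * b) = sp_mult (Rep_even a) (Rep_even b)"
  unfolding times_even_sp_def
  by (intro Rep_even_Abs_even sp_homog_mult_even sp_homog_Rep_even)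

instance
proof
  fix a b c :: "('a, 'b, 'c) even_sp"
  have fin: "sp_finite (Rep_even a)" for a :: "('a, 'b, 'c) even_sp"
    by (rule sp_homog_imp_finite[OF sp_homog_Rep_even])
  show "a * b * c = a * (b * c)"
    by (simp add: Rep_even_inject[symmetric] Rep_even_mult sp_mult_assoc fin)
  show "a * b = b * a"
    by (simp add: Rep_even_inject[symmetric] Rep_even_mult sp_mult_commute_even[OF sp_homog_Rep_even sp_homog_Rep_even])
  show "1 * a = a"
    by (simp add: Rep_even_inject[symmetric] Rep_even_mult one_even_sp_def Rep_even_Abs_even sp_homog_one)
qed

end

lemma Rep_even_one: "Rep_even 1 = sp_one"
  by (simp add: one_even_sp_def Rep_even_Abs_even sp_homog_one)

lemma Rep_even_power: "sp_homog False x \<Longrightarrow> Rep_even (Abs_even x ^ n) = sp_pow x n"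
  by (induction n) (simp_all add: Rep_even_one Rep_even_mult Rep_even_Abs_even sp_pow_Suc)

definition even_image ::
  "('e::linorder \<Rightarrow> ('e2, 'o2::linorder, 'k::comm_ring_1) sp) \<Rightarrow> ('e \<Rightarrow>\<^sub>0 nat) \<Rightarrow> ('e2, 'o2, 'k) sp"
  where "even_image ge e =
    foldr (\<lambda>k acc. sp_mult (sp_pow (ge k) (lookup e k)) acc) (sorted_list_of_set (keys e)) sp_one"

definition odd_image ::
  "('o::linorder \<Rightarrow> ('e2, 'o2::linorder, 'k::comm_ring_1) sp) \<Rightarrow> 'o set \<Rightarrow> ('e2, 'o2, 'k) sp" where
  "odd_image go T = foldr (\<lambda>j acc. sp_mult (go j) acc) (sorted_list_of_set T) sp_one"

lemma mono_image_eq: "mono_image ge go m = sp_mult (even_image ge (fst m)) (odd_image go (snd m))"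
  by (simp add: mono_image_def even_image_def odd_image_def)

lemma even_image_eq_prod:
  assumes "\<And>k. sp_homog False (ge k)"
  shows "even_image ge e = Rep_even (\<Prod>k\<in>keys e. Abs_even (ge k) ^ lookup e k)"
proof -
  have "distinct xs \<Longrightarrow> foldr (\<lambda>k acc. sp_mult (sp_pow (ge k) (lookup e k)) acc) xs sp_one
      = Rep_even (\<Prod>k\<in>set xs. Abs_even (ge k) ^ lookup e k)" for xs
    by (induction xs) (simp_all add: Rep_even_one Rep_even_mult Rep_even_power assms)
  then show ?thesis
    unfolding even_image_def by simp
qed

lemma keys_add_nat: "keys ((e1::'a \<Rightarrow>\<^sub>0 nat) + e2) = keys e1 \<union> keys e2"
  by (auto simp: in_keys_iff lookup_add)

lemma even_image_add:
  assumes "\<And>k. sp_homog False (ge k)"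
  shows "even_image ge (e1 + e2) = sp_mult (even_image ge e1) (even_image ge e2)"
proof -
  let ?a = "\<lambda>k. Abs_even (ge k)" and ?K = "keys e1 \<union> keys e2"
  have "(\<Prod>k\<in>keys (e1 + e2). ?a k ^ lookup (e1 + e2) k)
      = (\<Prod>k\<in>?K. ?a k ^ lookup e1 k * ?a k ^ lookup e2 k)"
    by (simp add: keys_add_nat lookup_add power_add)
  also have "\<dots> = (\<Prod>k\<in>?K. ?a k ^ lookup e1 k) * (\<Prod>k\<in>?K. ?a k ^ lookup e2 k)"
    by (rule prod.distrib)
  also have "(\<Prod>k\<in>?K. ?a k ^ lookup e1 k) = (\<Prod>k\<in>keys e1. ?a k ^ lookup e1 k)"
    by (rule prod.mono_neutral_right) (auto simp: in_keys_iff)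
  also have "(\<Prod>k\<in>?K. ?a k ^ lookup e2 k) = (\<Prod>k\<in>keys e2. ?a k ^ lookup e2 k)"
    by (rule prod.mono_neutral_right) (auto simp: in_keys_iff)
  finally show ?thesis
    by (simp add: even_image_eq_prod[OF assms] Rep_even_mult)
qed

lemma sp_homog_even_image: "(\<And>k. sp_homog False (ge k)) \<Longrightarrow> sp_homog False (even_image ge e)"
  by (simp add: even_image_eq_prod sp_homog_Rep_even)

lemma even_image_zero [simp]: "even_image ge 0 = sp_one"
  by (simp add: even_image_def)

lemma odd_image_empty [simp]: "odd_image go {} = sp_one"
  by (simp add: odd_image_def)

lemma odd_image_insert_min:
  assumes "finite T" "\<forall>t\<in>T. a < t"
  shows "odd_image go (insert a T) = sp_mult (go a) (odd_image go T)"
proof -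
  have "Min (insert a T) = a" "insert a T - {a} = T"
    using assms by (auto intro: Min_eqI less_imp_le)
  then show ?thesis
    unfolding odd_image_def by (subst sorted_list_of_set_nonempty) (use assms in auto)
qed

lemma sp_homog_odd_image:
  assumes "\<And>j. sp_homog True (go j)" "finite T"
  shows "sp_homog (odd (card T)) (odd_image go T)"
  using assms(2)
proof (induction T rule: finite_linorder_min_induct)
  case empty
  then show ?case
    by (simp add: sp_homog_one)
next
  case (insert b A)
  then have "b \<notin> A"
    by auto
  with insert show ?case
    by (simp add: odd_image_insert_min sp_homog_mult[OF assms(1) insert.IH, simplified])
qed

lemma sp_finite_odd_image: "(\<And>j. sp_finite (go j)) \<Longrightarrow> sp_finite (odd_image go T)"
proof -
  assume "\<And>j. sp_finite (go j)"
  then have "sp_finite (foldr (\<lambda>j acc. sp_mult (go j) acc) xs sp_one)" for xs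
    by (induction xs) (simp_all add: sp_finite_one sp_finite_mult)
  then show ?thesis
    by (simp add: odd_image_def)
qed

lemma sp_finite_even_image: "(\<And>k. sp_finite (ge k)) \<Longrightarrow> sp_finite (even_image ge e)"
proof -
  assume "\<And>k. sp_finite (ge k)"
  then have "sp_finite (foldr (\<lambda>k acc. sp_mult (sp_pow (ge k) (lookup e k)) acc) xs sp_one)" for xs
    by (induction xs) (simp_all add: sp_finite_one sp_finite_mult sp_finite_pow)
  then show ?thesis
    by (simp add: even_image_def)
qed

lemma sp_mult_odd_image_left_mem:
  assumes odd: "\<And>j. sp_homog True (go j)" and "finite T" "j \<in> T"
  shows "sp_mult (go j) (odd_image go T) = 0"
  using assms(2,3)
proof (induction T rule: finite_linorder_min_induct)
  case (insert b A)
  have fin: "sp_finite (odd_image go A)"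
    using odd by (intro sp_finite_odd_image sp_homog_imp_finite)
  have "odd_image go (insert b A) = sp_mult (go b) (odd_image go A)"
    using insert.hyps by (intro odd_image_insert_min) auto
  moreover have "sp_mult (go j) (sp_mult (go b) (odd_image go A)) = 0"
  proof (cases "j = b")
    case True
    then show ?thesis
      by (simp add: sp_mult_odd_self_left[OF odd fin])
  next
    case False
    then show ?thesis
      using insert by (simp add: sp_mult_left_anticommute[OF odd odd fin])
  qed
  ultimately show ?case
    by simp
qed simp

lemma sp_mult_odd_image_left_not_mem:
  assumes odd: "\<And>j. sp_homog True (go j)" and "finite T" "j \<notin> T"
  shows "sp_mult (go j) (odd_image go T)
    = sp_smult ((-1) ^ card {t\<in>T. t < j}) (odd_image go (insert j T))"
  using assms(2,3)
proof (induction T rule: finite_linorder_min_induct)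
  case empty
  show ?case
    by (simp add: odd_image_insert_min)
next
  case (insert b A)
  have fin: "sp_finite (odd_image go A)"
    using odd by (intro sp_finite_odd_image sp_homog_imp_finite)
  have b: "odd_image go (insert b A) = sp_mult (go b) (odd_image go A)"
    using insert.hyps by (intro odd_image_insert_min) auto
  show ?case
  proof (cases "j < b")
    case True
    then have none: "{t \<in> insert b A. t < j} = {}"
      using insert.hyps by auto
    have "odd_image go (insert j (insert b A)) = sp_mult (go j) (odd_image go (insert b A))"
      using True insert.hyps by (intro odd_image_insert_min) auto
    then show ?thesis
      unfolding none by simp
  next
    case False
    with insert.prems have "b < j" "j \<notin> A"
      by auto
    then have below: "{t \<in> insert b A. t < j} = insert b {t \<in> A. t < j}"
      by auto
    have "card {t \<in> insert b A. t < j} = Suc (card {t \<in> A. t < j})"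
      unfolding below using insert.hyps by (intro card_insert_disjoint) auto
    moreover have "odd_image go (insert b (insert j A)) = sp_mult (go b) (odd_image go (insert j A))"
      using \<open>b < j\<close> insert.hyps by (intro odd_image_insert_min) auto
    ultimately show ?thesis
      using insert.IH \<open>j \<notin> A\<close>
      by (simp add: b sp_mult_left_anticommute[OF odd odd fin] sp_smult_mult_right insert_commute
          flip: sp_smult_minus_one)
  qed
qed

lemma odd_image_mult:
  assumes odd: "\<And>j. sp_homog True (go j)" and "finite T1" "finite T2"
  shows "sp_mult (odd_image go T1) (odd_image go T2) =
    (if T1 \<inter> T2 = {} then sp_smult ((-1) ^ inv_count T1 T2) (odd_image go (T1 \<union> T2)) else 0)"
  using assms(2)
proof (induction T1 rule: finite_linorder_min_induct)
  case (insert b A)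
  have "b \<notin> A"
    using insert.hyps by auto
  have fin: "\<And>j. sp_finite (go j)"
    using odd by (rule sp_homog_imp_finite)
  have "sp_mult (odd_image go (insert b A)) (odd_image go T2)
      = sp_mult (go b) (sp_mult (odd_image go A) (odd_image go T2))"
    using insert.hyps by (simp add: odd_image_insert_min sp_mult_assoc fin sp_finite_odd_image)
  also have "\<dots> = (if A \<inter> T2 = {} then sp_smult ((-1) ^ inv_count A T2)
      (sp_mult (go b) (odd_image go (A \<union> T2))) else 0)"
    by (simp add: insert.IH sp_smult_mult_right)
  also have "\<dots> = (if insert b A \<inter> T2 = {}
      then sp_smult ((-1) ^ inv_count (insert b A) T2) (odd_image go (insert b A \<union> T2)) else 0)"
  proof (cases "b \<in> T2")
    case False
    have "{t \<in> A \<union> T2. t < b} = {t \<in> T2. t < b}"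
      using insert.hyps(2) by auto
    then have "sp_mult (go b) (odd_image go (A \<union> T2))
        = sp_smult ((-1) ^ card {t \<in> T2. t < b}) (odd_image go (insert b A \<union> T2))"
      using False \<open>b \<notin> A\<close> insert.hyps(1) assms(3)
        sp_mult_odd_image_left_not_mem[where go = go, OF odd, where T = "A \<union> T2" and j = b]
      by simp
    moreover have "inv_count ({b} \<union> A) T2 = inv_count {b} T2 + inv_count A T2"
      using \<open>b \<notin> A\<close> insert.hyps(1) assms(3) by (intro inv_count_Un_left) auto
    ultimately show ?thesis
      using False by (simp add: inv_count_singleton power_add mult.commute)
  qed (use insert.hyps(1) assms(3)
      sp_mult_odd_image_left_mem[where go = go, OF odd, where T = "A \<union> T2" and j = b] in auto)
  finally show ?case .
qed simp

definition graded_gens ::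
  "('e \<Rightarrow> ('e2, 'o2, 'k::zero) sp) \<Rightarrow> ('o \<Rightarrow> ('e2, 'o2, 'k) sp) \<Rightarrow> bool" where
  "graded_gens ge go \<longleftrightarrow> (\<forall>k. sp_homog False (ge k)) \<and> (\<forall>j. sp_homog True (go j))"

lemma mono_image_mult:
  assumes "graded_gens ge go" and "finite (snd m)" "finite (snd n)"
  shows "sp_mult (mono_image ge go m) (mono_image ge go n) =
    (if snd m \<inter> snd n = {} then sp_smult ((-1) ^ inv_count (snd m) (snd n))
        (mono_image ge go (fst m + fst n, snd m \<union> snd n)) else 0)"
proof -
  have even: "\<And>k. sp_homog False (ge k)" and odd: "\<And>j. sp_homog True (go j)"
    using assms(1) by (simp_all add: graded_gens_def)
  let ?E1 = "even_image ge (fst m)" and ?E2 = "even_image ge (fst n)"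
    and ?O1 = "odd_image go (snd m)" and ?O2 = "odd_image go (snd n)"
  have "\<And>k. sp_finite (ge k)" "\<And>j. sp_finite (go j)"
    using even odd by (auto intro: sp_homog_imp_finite)
  then have fin: "sp_finite ?E1" "sp_finite ?E2" "sp_finite ?O1" "sp_finite ?O2"
    by (simp_all add: sp_finite_even_image sp_finite_odd_image)
  have "sp_mult (mono_image ge go m) (mono_image ge go n) = sp_mult (sp_mult ?E1 ?O1) (sp_mult ?E2 ?O2)"
    by (simp add: mono_image_eq)
  also have "\<dots> = sp_mult ?E1 (sp_mult (sp_mult ?O1 ?E2) ?O2)"
    using fin by (simp add: sp_mult_assoc sp_finite_mult)
  also have "sp_mult ?O1 ?E2 = sp_mult ?E2 ?O1"
    by (rule sp_mult_commute_even[OF sp_homog_even_image[OF even] sp_homog_odd_image[OF odd assms(2)]])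
  also have "sp_mult ?E1 (sp_mult (sp_mult ?E2 ?O1) ?O2) = sp_mult (sp_mult ?E1 ?E2) (sp_mult ?O1 ?O2)"
    using fin by (simp add: sp_mult_assoc sp_finite_mult)
  finally show ?thesis
    using assms(2,3)
    by (simp add: even_image_add[OF even] odd_image_mult[OF odd] mono_image_eq sp_smult_mult_right)
qed

section \<open>Algebra maps out of a free graded-commutative algebra\<close>

lemma graded_gens_finite:
  assumes "graded_gens ge go"
  shows "sp_finite (ge k)" "sp_finite (go j)"
  using assms by (auto simp: graded_gens_def intro: sp_homog_imp_finite)

lemma hom_ext_eq_sum_over:
  assumes "finite A" "keys f \<subseteq> A"
  shows "hom_ext ge go f = (\<Sum>m\<in>A. sp_smult (lookup f m) (mono_image ge go m))"
  unfolding hom_ext_def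
  by (rule sum.mono_neutral_left) (use assms in \<open>auto simp: in_keys_iff\<close>)

lemma hom_ext_add: "hom_ext ge go (x + y) = hom_ext ge go x + hom_ext ge go y"
proof -
  let ?A = "keys x \<union> keys y"
  have "hom_ext ge go (x + y) = (\<Sum>m\<in>?A. sp_smult (lookup (x + y) m) (mono_image ge go m))"
    by (rule hom_ext_eq_sum_over) (simp_all add: keys_add)
  also have "\<dots> = (\<Sum>m\<in>?A. sp_smult (lookup x m) (mono_image ge go m))
      + (\<Sum>m\<in>?A. sp_smult (lookup y m) (mono_image ge go m))"
    by (simp add: lookup_add sp_smult_add_left sum.distrib)
  also have "\<dots> = hom_ext ge go x + hom_ext ge go y"
    by (simp add: hom_ext_eq_sum_over[where A = ?A and f = x] hom_ext_eq_sum_over[where A = ?A and f = y])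
  finally show ?thesis .
qed

lemma hom_ext_zero [simp]: "hom_ext ge go 0 = 0"
  by (simp add: hom_ext_def)

lemma hom_ext_sum: "hom_ext ge go (\<Sum>i\<in>I. f i) = (\<Sum>i\<in>I. hom_ext ge go (f i))"
  by (induction I rule: infinite_finite_induct) (simp_all add: hom_ext_add)

lemma hom_ext_single: "hom_ext ge go (single m c) = sp_smult c (mono_image ge go m)"
  by (subst hom_ext_eq_sum_over[of "{m}"]) auto

lemma hom_ext_smult: "hom_ext ge go (sp_smult c x) = sp_smult c (hom_ext ge go x)"
proof -
  have "hom_ext ge go (sp_smult c x) = (\<Sum>m\<in>keys x. sp_smult (lookup (sp_smult c x) m) (mono_image ge go m))"
    by (rule hom_ext_eq_sum_over) (simp_all add: keys_sp_smult)
  then show ?thesis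
    by (simp add: hom_ext_def sp_smult_sum)
qed

lemma hom_ext_one [simp]: "hom_ext ge go sp_one = sp_one"
proof -
  have "mono_image ge go (0, {}) = sp_one"
    by (simp add: mono_image_eq)
  then show ?thesis
    by (simp add: sp_const_def hom_ext_single)
qed

lemma hom_ext_sp_even [simp]: "hom_ext ge go (sp_even k) = ge k"
  by (simp add: sp_even_def hom_ext_single mono_image_eq even_image_def)

lemma hom_ext_sp_odd [simp]: "hom_ext ge go (sp_odd j) = go j"
  by (simp add: sp_odd_def hom_ext_single mono_image_eq odd_image_def)

theorem hom_ext_mult:
  assumes "graded_gens ge go" "sp_finite x" "sp_finite y"
  shows "hom_ext ge go (sp_mult x y) = sp_mult (hom_ext ge go x) (hom_ext ge go y)"
proof -
  have "hom_ext ge go (mono_term c m n) = sp_smult c (sp_mult (mono_image ge go m) (mono_image ge go n))"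
    if "m \<in> keys x" "n \<in> keys y" for c m n
    using assms that
    by (simp add: mono_image_mult mono_term_def hom_ext_single sp_keys_all_def sp_finite_def)
  then have "hom_ext ge go (sp_mult x y) = (\<Sum>m\<in>keys x. \<Sum>n\<in>keys y.
      sp_smult (lookup x m * lookup y n) (sp_mult (mono_image ge go m) (mono_image ge go n)))"
    by (simp add: sp_mult_def hom_ext_sum)
  also have "\<dots> = (\<Sum>m\<in>keys x. \<Sum>n\<in>keys y.
      sp_mult (sp_smult (lookup x m) (mono_image ge go m)) (sp_smult (lookup y n) (mono_image ge go n)))"
    by (simp add: sp_smult_mult_left sp_smult_mult_right mult.commute)
  also have "\<dots> = sp_mult (hom_ext ge go x) (hom_ext ge go y)"
    unfolding hom_ext_def by (rule sp_mult_sum_sum[symmetric])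
  finally show ?thesis .
qed

lemma hom_ext_pow:
  assumes "graded_gens ge go" "sp_finite x"
  shows "hom_ext ge go (sp_pow x n) = sp_pow (hom_ext ge go x) n"
  by (induction n) (simp_all add: sp_pow_Suc hom_ext_mult assms sp_finite_pow)

lemma sp_keys_all_hom_ext:
  assumes unit: "R (0, {})"
    and closed: "\<And>m n. R m \<Longrightarrow> R n \<Longrightarrow> snd m \<inter> snd n = {} \<Longrightarrow> R (fst m + fst n, snd m \<union> snd n)"
    and even: "\<And>m k. m \<in> keys f \<Longrightarrow> k \<in> keys (fst m) \<Longrightarrow> sp_keys_all R (ge k)"
    and odd: "\<And>m j. m \<in> keys f \<Longrightarrow> j \<in> snd m \<Longrightarrow> sp_keys_all R (go j)"
    and fin: "\<And>m. m \<in> keys f \<Longrightarrow> finite (snd m)"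
  shows "sp_keys_all R (hom_ext ge go f)"
  unfolding hom_ext_def
proof (intro sp_keys_all_sum sp_keys_all_smult)
  fix m
  assume m: "m \<in> keys f"
  have foldr: "sp_keys_all R (foldr (\<lambda>k acc. sp_mult (g k) acc) xs sp_one)"
    if "\<And>k. k \<in> set xs \<Longrightarrow> sp_keys_all R (g k)" for g xs
    using that by (induction xs) (auto simp: sp_keys_all_one unit intro: sp_keys_all_mult[where P = R and Q = R and R = R, OF _ _ closed])
  have "sp_keys_all R (even_image ge (fst m))"
    unfolding even_image_def using even[OF m] by (intro foldr sp_keys_all_pow[OF _ unit closed]) simp
  moreover have "sp_keys_all R (odd_image go (snd m))"
    unfolding odd_image_def using odd[OF m] fin[OF m] by (intro foldr) simp
  ultimately show "sp_keys_all R (mono_image ge go m)"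
    unfolding mono_image_eq by (rule sp_keys_all_mult[where P = R and Q = R and R = R, OF _ _ closed])
qed

lemma sp_homog_hom_ext:
  assumes "graded_gens ge go" "sp_homog b x"
  shows "sp_homog b (hom_ext ge go x)"
  unfolding hom_ext_def
proof (intro sp_homog_sum sp_homog_smult)
  fix m
  assume "m \<in> keys x"
  then have fin: "finite (snd m)" and par: "odd (card (snd m)) = b"
    using assms(2) by (auto simp: sp_homog_def sp_keys_all_def)
  have "sp_homog False (even_image ge (fst m))"
    using assms(1) by (intro sp_homog_even_image) (simp add: graded_gens_def)
  moreover have "sp_homog (odd (card (snd m))) (odd_image go (snd m))"
    using assms(1) fin by (intro sp_homog_odd_image) (simp_all add: graded_gens_def)
  ultimately show "sp_homog b (mono_image ge go m)"
    unfolding mono_image_eq using sp_homog_mult par by fastforce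
qed

lemma hom_ext_cong:
  assumes "\<And>m k. m \<in> keys f \<Longrightarrow> k \<in> keys (fst m) \<Longrightarrow> ge k = ge' k"
    and "\<And>m j. m \<in> keys f \<Longrightarrow> j \<in> snd m \<Longrightarrow> go j = go' j"
    and "\<And>m. m \<in> keys f \<Longrightarrow> finite (snd m)"
  shows "hom_ext ge go f = hom_ext ge' go' f"
  unfolding hom_ext_def mono_image_eq even_image_def odd_image_def
  using assms by (intro sum.cong refl arg_cong2[where f = sp_smult] arg_cong2[where f = sp_mult] foldr_cong) auto

lemma hom_ext_hom_ext:
  assumes "graded_gens ge go" "\<And>k. sp_finite (ge1 k)" "\<And>j. sp_finite (go1 j)"
  shows "hom_ext ge go (hom_ext ge1 go1 x)
    = hom_ext (\<lambda>k. hom_ext ge go (ge1 k)) (\<lambda>j. hom_ext ge go (go1 j)) x"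
proof -
  have finite_foldr: "sp_finite (foldr (\<lambda>k acc. sp_mult (g k) acc) xs sp_one)"
    if "\<And>k. sp_finite (g k)" for g xs
    using that by (induction xs) (simp_all add: sp_finite_one sp_finite_mult)
  have foldr: "hom_ext ge go (foldr (\<lambda>k acc. sp_mult (g k) acc) xs sp_one)
      = foldr (\<lambda>k acc. sp_mult (hom_ext ge go (g k)) acc) xs sp_one"
    if "\<And>k. sp_finite (g k)" for g xs
    using that by (induction xs) (simp_all add: hom_ext_mult assms(1) finite_foldr)
  have "hom_ext ge go (even_image ge1 e) = even_image (\<lambda>k. hom_ext ge go (ge1 k)) e" for e
    unfolding even_image_def using assms by (simp add: foldr sp_finite_pow hom_ext_pow)
  moreover have "hom_ext ge go (odd_image go1 T) = odd_image (\<lambda>j. hom_ext ge go (go1 j)) T" for T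
    unfolding odd_image_def using assms(3) by (rule foldr)
  ultimately have "hom_ext ge go (mono_image ge1 go1 m)
      = mono_image (\<lambda>k. hom_ext ge go (ge1 k)) (\<lambda>j. hom_ext ge go (go1 j)) m" for m
    using assms by (simp add: mono_image_eq hom_ext_mult sp_finite_even_image sp_finite_odd_image)
  then show ?thesis
    by (simp add: hom_ext_def[of ge1 go1 x] hom_ext_sum hom_ext_smult) (simp add: hom_ext_def)
qed

definition graded_hom ::
  "(('e::linorder, 'o::linorder, 'k::comm_ring_1) sp \<Rightarrow> ('e2, 'o2::linorder, 'k) sp) \<Rightarrow> bool" where
  "graded_hom F \<longleftrightarrow> (\<exists>ge go. graded_gens ge go \<and> F = hom_ext ge go)"

lemma graded_hom_hom_ext: "graded_gens ge go \<Longrightarrow> graded_hom (hom_ext ge go)"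
  unfolding graded_hom_def by blast

lemma graded_hom_eq_hom_ext_gens:
  "graded_hom F \<Longrightarrow> F = hom_ext (\<lambda>k. F (sp_even k)) (\<lambda>j. F (sp_odd j))"
  unfolding graded_hom_def by auto

lemma graded_hom_apply_hom_ext:
  assumes "graded_hom F" "\<And>k. sp_finite (ge k)" "\<And>j. sp_finite (go j)"
  shows "F (hom_ext ge go x) = hom_ext (\<lambda>k. F (ge k)) (\<lambda>j. F (go j)) x"
  using assms hom_ext_hom_ext unfolding graded_hom_def by blast

lemma graded_hom_homog: "graded_hom F \<Longrightarrow> sp_homog b x \<Longrightarrow> sp_homog b (F x)"
  unfolding graded_hom_def using sp_homog_hom_ext by blast

lemma graded_hom_comp:
  assumes "graded_hom F" "graded_hom G"
  shows "graded_hom (F \<circ> G)"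
proof -
  obtain ge go where G: "graded_gens ge go" "G = hom_ext ge go"
    using assms(2) unfolding graded_hom_def by blast
  then have "F \<circ> G = hom_ext (\<lambda>k. F (ge k)) (\<lambda>j. F (go j))"
    using graded_hom_apply_hom_ext[OF assms(1)] graded_gens_finite by fastforce
  moreover have "graded_gens (\<lambda>k. F (ge k)) (\<lambda>j. F (go j))"
    using G(1) graded_hom_homog[OF assms(1)] unfolding graded_gens_def by blast
  ultimately show ?thesis
    by (simp add: graded_hom_hom_ext)
qed

lemma graded_hom_add: "graded_hom F \<Longrightarrow> F (x + y) = F x + F y"
  unfolding graded_hom_def using hom_ext_add by blast

lemma graded_hom_sum: "graded_hom F \<Longrightarrow> F (\<Sum>i\<in>I. f i) = (\<Sum>i\<in>I. F (f i))"
  unfolding graded_hom_def using hom_ext_sum by blast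

lemma graded_hom_mult:
  "graded_hom F \<Longrightarrow> sp_finite x \<Longrightarrow> sp_finite y \<Longrightarrow> F (sp_mult x y) = sp_mult (F x) (F y)"
  unfolding graded_hom_def using hom_ext_mult by blast

lemma graded_hom_pow: "graded_hom F \<Longrightarrow> sp_finite x \<Longrightarrow> F (sp_pow x n) = sp_pow (F x) n"
  unfolding graded_hom_def using hom_ext_pow by blast

section \<open>The coproduct, the coaction and \<open>phi i\<close> on generators\<close>

lemma sp_homog_sp_even [simp]: "sp_homog False (sp_even k)"
  by (simp add: sp_homog_def sp_keys_all_def sp_even_def)

lemma sp_homog_sp_odd [simp]: "sp_homog True (sp_odd j)"
  by (simp add: sp_homog_def sp_keys_all_def sp_odd_def)

lemma sp_homog_generators [simp]:
  "sp_homog False (zeta k)" "sp_homog False (zetaL k)" "sp_homog False (zetaR k)"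
  "sp_homog True (taubar k)" "sp_homog True (taubarL k)" "sp_homog True (taubarR k)"
  by (simp_all add: zeta_def zetaL_def zetaR_def taubar_def taubarL_def taubarR_def sp_homog_one)

lemma sp_finite_generators [simp]:
  "sp_finite (zeta k)" "sp_finite (zetaL k)" "sp_finite (zetaR k)"
  "sp_finite (taubar k)" "sp_finite (taubarL k)" "sp_finite (taubarR k)"
  by (rule sp_homog_imp_finite, rule sp_homog_generators)+

lemma hom_ext_zeta: "hom_ext ge go (zeta k) = (if k = 0 then sp_one else ge k)"
  by (simp add: zeta_def)

lemma hom_ext_zetaL: "hom_ext ge go (zetaL k) = (if k = 0 then sp_one else ge (False, k))"
  by (simp add: zetaL_def)

lemma hom_ext_zetaR: "hom_ext ge go (zetaR k) = (if k = 0 then sp_one else ge (True, k))"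
  by (simp add: zetaR_def)

lemma hom_ext_taubar [simp]: "hom_ext ge go (taubar j) = go j"
  by (simp add: taubar_def)

lemma hom_ext_taubarL [simp]: "hom_ext ge go (taubarL j) = go (False, j)"
  by (simp add: taubarL_def)

lemma hom_ext_taubarR [simp]: "hom_ext ge go (taubarR j) = go (True, j)"
  by (simp add: taubarR_def)

lemma graded_hom_psi: "graded_hom (psi p)"
  unfolding psi_def
  by (intro graded_hom_hom_ext)
    (simp add: graded_gens_def sp_homog_sum sp_homog_add sp_homog_mult_even sp_homog_pow
      sp_homog_mult[of True _ False, simplified])

lemma psi_zeta: "psi p (zeta n) = (\<Sum>b\<le>n. sp_mult (zetaL b) (sp_pow (zetaR (n - b)) (p ^ b)))"
  by (cases n) (simp_all add: psi_def hom_ext_zeta zetaL_def zetaR_def)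

lemma psi_taubar:
  "psi p (taubar n) = taubarR n + (\<Sum>b\<le>n. sp_mult (taubarL b) (sp_pow (zetaR (n - b)) (p ^ b)))"
  by (simp add: psi_def)

lemma graded_hom_projE: "graded_hom (projE i)"
  unfolding projE_def
  by (intro graded_hom_hom_ext) (simp add: graded_gens_def sp_homog_one)

lemma projE_generators:
  "projE i (zetaL k) = (if k = 0 then sp_one else 0)"
  "projE i (zetaR k) = zetaR k"
  "projE i (taubarL j) = (if j \<le> i then taubarL j else 0)"
  "projE i (taubarR j) = taubarR j"
  by (simp_all add: projE_def hom_ext_zetaL hom_ext_zetaR zetaR_def)

lemma graded_hom_coact: "graded_hom (coact p i)"
  unfolding coact_def[abs_def]
  using graded_hom_comp[OF graded_hom_projE graded_hom_psi] by (simp add: comp_def)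

lemma coact_zeta: "coact p i (zeta n) = zetaR n"
proof -
  have "coact p i (zeta n) = (\<Sum>b\<le>n. projE i (sp_mult (zetaL b) (sp_pow (zetaR (n - b)) (p ^ b))))"
    by (simp add: coact_def psi_zeta graded_hom_sum[OF graded_hom_projE])
  also have "\<dots> = (\<Sum>b\<le>n. if b = 0 then zetaR n else 0)"
    by (intro sum.cong refl)
      (simp add: graded_hom_mult[OF graded_hom_projE] graded_hom_pow[OF graded_hom_projE]
        sp_finite_pow projE_generators)
  finally show ?thesis
    by simp
qed

lemma coact_taubar:
  "coact p i (taubar n)
    = taubarR n + (\<Sum>b\<le>min i n. sp_mult (taubarL b) (sp_pow (zetaR (n - b)) (p ^ b)))"
proof -
  have "coact p i (taubar n) = taubarR n
      + (\<Sum>b\<le>n. projE i (sp_mult (taubarL b) (sp_pow (zetaR (n - b)) (p ^ b))))"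
    by (simp add: coact_def psi_taubar graded_hom_sum[OF graded_hom_projE]
        graded_hom_add[OF graded_hom_projE] projE_generators)
  also have "(\<Sum>b\<le>n. projE i (sp_mult (taubarL b) (sp_pow (zetaR (n - b)) (p ^ b))))
      = (\<Sum>b\<le>n. if b \<le> i then sp_mult (taubarL b) (sp_pow (zetaR (n - b)) (p ^ b)) else 0)"
    by (intro sum.cong refl)
      (simp add: graded_hom_mult[OF graded_hom_projE] graded_hom_pow[OF graded_hom_projE]
        sp_finite_pow projE_generators)
  also have "\<dots> = (\<Sum>b\<in>{b\<in>{..n}. b \<le> i}. sp_mult (taubarL b) (sp_pow (zetaR (n - b)) (p ^ b)))"
    by (rule sum.inter_filter[symmetric]) simp
  also have "{b\<in>{..n}. b \<le> i} = {..min i n}"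
    by auto
  finally show ?thesis .
qed

lemma id_tensor_phi:
  "id_tensor (phi i) = (hom_ext (\<lambda>(s, k). if s then zetaR (k - 1) else zetaL k)
    (\<lambda>(s, j). if s then taubarR (j - 1) else taubarL j) :: 'k::comm_ring_1 Atens \<Rightarrow> 'k Atens)"
  unfolding id_tensor_def
  by (intro arg_cong2[where f = hom_ext])
    (auto simp: fun_eq_iff phi_def embR_def hom_ext_zeta zeta_def zetaR_def)

lemma graded_hom_id_tensor_phi: "graded_hom (id_tensor (phi i))"
  unfolding id_tensor_phi by (intro graded_hom_hom_ext) (simp add: graded_gens_def)

lemma id_tensor_phi_generators:
  "id_tensor (phi i) (zetaL k) = zetaL k"
  "id_tensor (phi i) (zetaR k) = zetaR (k - 1)"
  "id_tensor (phi i) (taubarL j) = taubarL j"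
  "id_tensor (phi i) (taubarR j) = taubarR (j - 1)"
  by (simp_all add: id_tensor_phi hom_ext_zetaL hom_ext_zetaR zetaL_def zetaR_def)

lemma coact_phi_zeta: "coact p i (zeta (k - 1)) = id_tensor (phi i) (coact p i (zeta k))"
  by (simp add: coact_zeta id_tensor_phi_generators)

lemma coact_phi_taubar:
  assumes "i < j"
  shows "coact p i (taubar (j - 1)) = id_tensor (phi i) (coact p i (taubar j))"
proof -
  have "min i (j - 1) = i" "min i j = i" "\<And>b. j - 1 - b = j - b - 1"
    using assms by auto
  then show ?thesis
    by (simp add: coact_taubar id_tensor_phi_generators graded_hom_add[OF graded_hom_id_tensor_phi]
        graded_hom_sum[OF graded_hom_id_tensor_phi] graded_hom_mult[OF graded_hom_id_tensor_phi]
        graded_hom_pow[OF graded_hom_id_tensor_phi] sp_finite_pow)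
qed

lemma AmodE_phi:
  assumes "AmodE i f" "i \<ge> 1"
  shows "AmodE (i - 1) (phi i f)"
proof -
  let ?R = "\<lambda>m::(nat, nat) mono. 0 \<notin> keys (fst m) \<and> finite (snd m) \<and> snd m \<subseteq> {i..}"
  have "sp_keys_all ?R (phi i f)"
    unfolding phi_def
  proof (rule sp_keys_all_hom_ext)
    show "?R (fst m + fst n, snd m \<union> snd n)" if "?R m" "?R n" for m n :: "(nat, nat) mono"
      using that by (simp add: keys_add_nat)
  next
    fix m k
    assume "m \<in> keys f" "k \<in> keys (fst m)"
    then have "k \<noteq> 0"
      using assms(1) unfolding AmodE_def by metis
    then show "sp_keys_all ?R (zeta (k - 1))"
      by (cases "k = 1") (auto simp: zeta_def sp_keys_all_def sp_even_def sp_const_def)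
  next
    fix m j
    assume "m \<in> keys f" "j \<in> snd m"
    then have "j \<in> {i + 1..}"
      using assms(1) unfolding AmodE_def by blast
    then show "sp_keys_all ?R (taubar (j - 1))"
      by (auto simp: taubar_def sp_keys_all_def sp_odd_def)
  qed (use assms(1) in \<open>auto simp: AmodE_def\<close>)
  then show ?thesis
    using assms(2) by (auto simp: sp_keys_all_def AmodE_def)
qed

lemma coact_phi:
  fixes f :: "'k::comm_ring_1 Astar"
  assumes "AmodE i f"
  shows "coact p i (phi i f) = id_tensor (phi i) (coact p i f)"
proof -
  have keys: "0 \<notin> keys (fst m)" "finite (snd m)" "snd m \<subseteq> {i + 1..}" if "m \<in> keys f" for m
    using assms that by (auto simp: AmodE_def)
  have "coact p i (phi i f) = hom_ext (\<lambda>k. coact p i (zeta (k - 1))) (\<lambda>j. coact p i (taubar (j - 1))) f"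
    unfolding phi_def by (rule graded_hom_apply_hom_ext[OF graded_hom_coact]) simp_all
  also have "\<dots> = hom_ext (\<lambda>k. id_tensor (phi i) (coact p i (sp_even k)))
      (\<lambda>j. id_tensor (phi i) (coact p i (sp_odd j))) f"
  proof (rule hom_ext_cong)
    fix m k
    assume "m \<in> keys f" "k \<in> keys (fst m)"
    then have "k \<noteq> 0"
      using keys(1) by metis
    then have "zeta k = sp_even k"
      by (simp add: zeta_def)
    then show "coact p i (zeta (k - 1)) = id_tensor (phi i) (coact p i (sp_even k))"
      by (metis coact_phi_zeta)
  next
    fix m j
    assume "m \<in> keys f" "j \<in> snd m"
    then have "i < j"
      using keys(3) by fastforce
    then show "coact p i (taubar (j - 1)) = id_tensor (phi i) (coact p i (sp_odd j))"
      using coact_phi_taubar by (simp add: taubar_def)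
  qed (rule keys(2))
  also have "\<dots> = id_tensor (phi i) (hom_ext (\<lambda>k. coact p i (sp_even k)) (\<lambda>j. coact p i (sp_odd j)) f)"
    using graded_hom_homog[OF graded_hom_coact sp_homog_sp_even]
      graded_hom_homog[OF graded_hom_coact sp_homog_sp_odd]
    by (intro graded_hom_apply_hom_ext[OF graded_hom_id_tensor_phi, symmetric] sp_homog_imp_finite)
  also have "\<dots> = id_tensor (phi i) (coact p i f)"
    by (simp flip: graded_hom_eq_hom_ext_gens[OF graded_hom_coact])
  finally show ?thesis .
qed

theorem mainTheorem12:
  fixes p i :: nat and f :: "'k::{field,finite} Astar"
  assumes "prime p" and "odd p" and "card (UNIV :: 'k set) = p"
    and "i \<ge> 1" and "AmodE i f"
  shows "AmodE (i - 1) (phi i f) \<and> coact p i (phi i f) = id_tensor (phi i) (coact p i f)"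
  using AmodE_phi[OF assms(5,4)] coact_phi[OF assms(5)] by simp

end
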